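(* Let $p\geq 1$ and $0\leq k<p$ be integers and let $\sigma=\mathrm{ReLU}^p$. For each $N\geq 1$, let $w_1,\dots,w_N\in\{1,-1\}$ and let $\mathbf{b}=(b_1,\dots,b_N)\in\mathbb{R}^N$ be quasi-evenly spaced on $[-1,1]$, i.e. $b_n=-1+2(n-1)/N+o(N^{-1})$ for $n=1,\dots,N$ (uniformly in $n$ as $N\to\infty$). Let $\mathbf{G}^{(k)}_\sigma\in\mathbb{R}^{N\times N}$ be the matrix with entries $$[\mathbf{G}^{(k)}_\sigma]_{i,j}=\int_{-1}^1 w_i^k w_j^k\,\sigma^{(k)}(w_ix-b_i)\,\sigma^{(k)}(w_jx-b_j)\,dx,\qquad i,j=1,\dots,N,$$ with eigenvalues $\lambda^{(k)}_1\geq\cdots\geq\lambda^{(k)}_N\geq 0$, and let $\kappa(\mathbf{G}^{(k)}_\sigma)=\lambda^{(k)}_1/\lambda^{(k)}_N$. Then $\kappa(\mathbf{G}^{(k)}_\sigma)=\Omega(N^{1+2(p-k)})$ as $N\to\infty$; that is, there exists a constant $C>0$ such that $\kappa(\mathbf{G}^{(k)}_\sigma)\geq C N^{1+2(p-k)}$ for all sufficiently large $N$.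
   Context: $\mathrm{ReLU}^p(z)=(\max\{0,z\})^p$ and $\sigma^{(k)}$ denotes the $k$-th derivative of $\sigma$ (so $\sigma^{(k)}(z)=\frac{p!}{(p-k)!}\mathrm{ReLU}^{p-k}(z)$ for $k<p$). *)

theory Defs
  imports "HOL-Analysis.Analysis" "Jordan_Normal_Form.Char_Poly"
begin

definition relu_pow :: "nat \<Rightarrow> real \<Rightarrow> real" where
  "relu_pow p z = (max 0 z) ^ p"

definition relu_pow_deriv :: "nat \<Rightarrow> nat \<Rightarrow> real \<Rightarrow> real" where
  "relu_pow_deriv p k = (deriv ^^ k) (relu_pow p)"

text \<open>Gram matrix G^(k)_sigma for the N-neuron network; weights w N n and biases b N n
  are indexed by n = 1..N; matrix rows/columns are 0-indexed (row i is neuron i+1).\<close>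
definition gram_matrix ::
  "nat \<Rightarrow> nat \<Rightarrow> (nat \<Rightarrow> nat \<Rightarrow> real) \<Rightarrow> (nat \<Rightarrow> nat \<Rightarrow> real) \<Rightarrow> nat \<Rightarrow> real mat" where
  "gram_matrix p k w b N = Matrix.mat N N (\<lambda>(i, j).
     integral {-1..1} (\<lambda>x. (w N (i+1)) ^ k * (w N (j+1)) ^ k
        * relu_pow_deriv p k (w N (i+1) * x - b N (i+1))
        * relu_pow_deriv p k (w N (j+1) * x - b N (j+1))))"

text \<open>Largest and smallest eigenvalue (the matrices considered are real symmetric).\<close>
definition lambda_max :: "real mat \<Rightarrow> real" where
  "lambda_max A = Max {a. eigenvalue A a}"

definition lambda_min :: "real mat \<Rightarrow> real" where
  "lambda_min A = Min {a. eigenvalue A a}"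

definition quasi_evenly_spaced :: "(nat \<Rightarrow> nat \<Rightarrow> real) \<Rightarrow> bool" where
  "quasi_evenly_spaced b \<longleftrightarrow>
     (\<forall>\<epsilon>>0. \<exists>N0. \<forall>N\<ge>N0. \<forall>n\<in>{1..N}.
        \<bar>b N n - (-1 + 2 * (real n - 1) / real N)\<bar> \<le> \<epsilon> / real N)"

end

theory Submission
  imports Defs
begin

text \<open>
  With \<open>m = p - k\<close>, the \<open>i\<close>-th neuron contributes the function \<open>\<phi>\<^sub>i\<close>, a multiple of the
  truncated power \<open>(w\<^sub>i t - b\<^sub>i)\<^sub>+ ^ m\<close>, and the Gram matrix is the matrix of the quadratic
  form \<open>x \<mapsto> \<integral> (\<Sum>\<^sub>i x\<^sub>i \<phi>\<^sub>i)\<^sup>2\<close> on \<open>[-1, 1]\<close>; its extreme eigenvalues are the extremes of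
  the Rayleigh quotient. The first bias is close to \<open>-1\<close>, so the first diagonal entry, and
  hence \<open>\<lambda>\<^sub>1\<close>, is bounded below by a constant. For \<open>\<lambda>\<^sub>N\<close>, pick \<open>m + 2\<close> of the first
  \<open>2m + 3\<close> neurons with a common sign \<open>w\<close>; their biases lie in an interval of length
  \<open>O(1/N)\<close>. A nonzero coefficient vector annihilating the moments \<open>1, \<beta>, \<dots>, \<beta>^m\<close> of these
  biases makes \<open>\<Sum>\<^sub>a v\<^sub>a (y - \<beta>\<^sub>a)\<^sub>+ ^ m\<close> vanish outside that interval, and it is
  \<open>O(N^-m)\<close> inside, so the Rayleigh quotient of this vector is \<open>O(N^-(2m+1))\<close>.
\<close>

section \<open>Rayleigh quotients of symmetric real matrices\<close>

definition quad_form :: "real mat \<Rightarrow> nat \<Rightarrow> (nat \<Rightarrow> real) \<Rightarrow> real" where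
  "quad_form A n x = (\<Sum>i<n. \<Sum>j<n. A $$ (i, j) * x i * x j)"

definition sum_sq :: "nat \<Rightarrow> (nat \<Rightarrow> real) \<Rightarrow> real" where
  "sum_sq n x = (\<Sum>i<n. (x i)\<^sup>2)"

lemma quad_form_cong: "(\<And>i. i < n \<Longrightarrow> x i = y i) \<Longrightarrow> quad_form A n x = quad_form A n y"
  unfolding quad_form_def by (intro sum.cong) auto

lemma sum_sq_cong: "(\<And>i. i < n \<Longrightarrow> x i = y i) \<Longrightarrow> sum_sq n x = sum_sq n y"
  unfolding sum_sq_def by (intro sum.cong) auto

lemma quad_form_scale: "quad_form A n (\<lambda>i. c * x i) = c\<^sup>2 * quad_form A n x"
  unfolding quad_form_def by (simp add: sum_distrib_left power2_eq_square mult_ac)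

lemma sum_sq_scale: "sum_sq n (\<lambda>i. c * x i) = c\<^sup>2 * sum_sq n x"
  unfolding sum_sq_def by (simp add: sum_distrib_left power_mult_distrib)

lemma sum_sq_nonneg: "0 \<le> sum_sq n x"
  unfolding sum_sq_def by (simp add: sum_nonneg)

lemma sum_sq_eq_0_iff: "sum_sq n x = 0 \<longleftrightarrow> (\<forall>i<n. x i = 0)"
  unfolding sum_sq_def by (subst sum_nonneg_eq_0_iff) auto

lemma quad_form_add_scaled:
  assumes sym: "\<forall>i<n. \<forall>j<n. A $$ (i, j) = A $$ (j, i)"
  shows "quad_form A n (\<lambda>i. x i + t * y i) =
    quad_form A n x + 2 * t * (\<Sum>i<n. y i * (\<Sum>j<n. A $$ (i, j) * x j)) + t\<^sup>2 * quad_form A n y"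
proof -
  have swap: "(\<Sum>i<n. \<Sum>j<n. A $$ (i, j) * x i * y j) = (\<Sum>i<n. y i * (\<Sum>j<n. A $$ (i, j) * x j))"
    by (subst sum.swap) (auto intro!: sum.cong simp: sym sum_distrib_left mult_ac)
  have "quad_form A n (\<lambda>i. x i + t * y i) =
      (\<Sum>i<n. \<Sum>j<n. A $$ (i, j) * x i * x j + t * (A $$ (i, j) * x i * y j)
        + t * (A $$ (i, j) * y i * x j) + t\<^sup>2 * (A $$ (i, j) * y i * y j))"
    unfolding quad_form_def by (intro sum.cong refl) (simp add: algebra_simps power2_eq_square)
  also have "\<dots> = quad_form A n x + t * (\<Sum>i<n. \<Sum>j<n. A $$ (i, j) * x i * y j)
      + t * (\<Sum>i<n. \<Sum>j<n. A $$ (i, j) * y i * x j) + t\<^sup>2 * quad_form A n y"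
    unfolding quad_form_def by (simp only: sum.distrib sum_distrib_left)
  finally show ?thesis
    unfolding swap by (simp add: sum_distrib_left mult_ac)
qed

lemma sum_sq_add_scaled:
  "sum_sq n (\<lambda>i. x i + t * y i) = sum_sq n x + 2 * t * (\<Sum>i<n. x i * y i) + t\<^sup>2 * sum_sq n y"
  unfolding sum_sq_def by (simp add: power2_eq_square algebra_simps sum.distrib sum_distrib_left)

lemma linear_le_quadratic_imp_zero:
  fixes a b :: real
  assumes "\<And>t. 2 * t * a \<le> t\<^sup>2 * b"
  shows "a = 0"
proof -
  define d where "d = \<bar>b\<bar> + 1"
  have d: "0 < d" unfolding d_def by simp
  have "2 * (a / d) * a * d\<^sup>2 \<le> (a / d)\<^sup>2 * b * d\<^sup>2"
    using mult_right_mono[OF assms[of "a / d"] zero_le_power2] .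
  then have "2 * a\<^sup>2 * d \<le> a\<^sup>2 * b"
    using d by (simp add: power2_eq_square field_simps)
  moreover have "a\<^sup>2 * b \<le> a\<^sup>2 * \<bar>b\<bar>"
    by (simp add: mult_left_mono)
  ultimately have "a\<^sup>2 * (\<bar>b\<bar> + 2) \<le> 0"
    unfolding d_def by (simp add: algebra_simps)
  moreover have "0 < \<bar>b\<bar> + 2"
    by (simp add: add_nonneg_pos)
  ultimately have "a\<^sup>2 \<le> 0"
    by (auto simp: mult_le_0_iff)
  then show ?thesis by simp
qed

text \<open>Moving \<open>x\<close> along the residual \<open>r = A x - \<mu> x\<close> raises \<open>quad_form A n - \<mu> sum_sq n\<close>
  by \<open>2 t |r|\<^sup>2 + O(t\<^sup>2)\<close>, so at a maximiser the residual vanishes.\<close>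

lemma rayleigh_maximiser_eigen_equation:
  assumes sym: "\<forall>i<n. \<forall>j<n. A $$ (i, j) = A $$ (j, i)"
    and le: "\<And>y. quad_form A n y \<le> \<mu> * sum_sq n y"
    and eq: "quad_form A n x = \<mu> * sum_sq n x"
    and i: "i < n"
  shows "(\<Sum>j<n. A $$ (i, j) * x j) = \<mu> * x i"
proof -
  define r where "r i = (\<Sum>j<n. A $$ (i, j) * x j) - \<mu> * x i" for i
  have "2 * t * sum_sq n r \<le> t\<^sup>2 * (\<mu> * sum_sq n r - quad_form A n r)" for t
  proof -
    have "quad_form A n x + 2 * t * (\<Sum>i<n. r i * (\<Sum>j<n. A $$ (i, j) * x j)) + t\<^sup>2 * quad_form A n r
        \<le> \<mu> * (sum_sq n x + 2 * t * (\<Sum>i<n. x i * r i) + t\<^sup>2 * sum_sq n r)"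
      using le[of "\<lambda>i. x i + t * r i"]
      unfolding quad_form_add_scaled[OF sym] sum_sq_add_scaled .
    moreover have "(\<Sum>i<n. r i * (\<Sum>j<n. A $$ (i, j) * x j)) = sum_sq n r + \<mu> * (\<Sum>i<n. x i * r i)"
    proof -
      have "(\<Sum>j<n. A $$ (i, j) * x j) = r i + \<mu> * x i" for i
        unfolding r_def by simp
      then show ?thesis
        unfolding sum_sq_def by (simp add: power2_eq_square algebra_simps sum.distrib sum_distrib_left)
    qed
    ultimately show ?thesis
      using eq by (simp add: algebra_simps)
  qed
  then have "sum_sq n r = 0"
    by (rule linear_le_quadratic_imp_zero)
  then show ?thesis
    using i unfolding sum_sq_eq_0_iff r_def by simp
qed

lemma quad_form_le_if_le_on_unit_sphere:
  assumes le: "\<And>z. sum_sq n z = 1 \<Longrightarrow> (\<forall>i\<ge>n. z i = 0) \<Longrightarrow> quad_form A n z \<le> \<mu>"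
  shows "quad_form A n y \<le> \<mu> * sum_sq n y"
proof (cases "sum_sq n y = 0")
  case True
  then have "quad_form A n y = quad_form A n (\<lambda>_. 0)"
    by (intro quad_form_cong) (simp add: sum_sq_eq_0_iff)
  then show ?thesis
    using True by (simp add: quad_form_def)
next
  case False
  define s where "s = sqrt (sum_sq n y)"
  have s: "0 < s" "s\<^sup>2 = sum_sq n y"
    using False sum_sq_nonneg[of n y] unfolding s_def by auto
  define z where "z i = (if i < n then y i / s else 0)" for i
  have z_eq: "\<And>i. i < n \<Longrightarrow> z i = (1 / s) * y i"
    unfolding z_def by simp
  have "sum_sq n z = (1 / s)\<^sup>2 * sum_sq n y"
    by (simp only: sum_sq_cong[OF z_eq] sum_sq_scale)
  then have "sum_sq n z = 1"
    using s False by (simp add: power_divide)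
  then have "quad_form A n z \<le> \<mu>"
    by (rule le) (simp add: z_def)
  moreover have "quad_form A n z = (1 / s)\<^sup>2 * quad_form A n y"
    by (simp only: quad_form_cong[OF z_eq] quad_form_scale)
  ultimately have "quad_form A n y / s\<^sup>2 \<le> \<mu>"
    by (simp add: power_divide)
  then show ?thesis
    using s(1) unfolding s(2)[symmetric] by (simp add: pos_divide_le_eq mult.commute)
qed

lemma exists_rayleigh_maximiser:
  assumes n: "0 < n"
  shows "\<exists>x. sum_sq n x = 1 \<and> (\<forall>y. quad_form A n y \<le> quad_form A n x * sum_sq n y)"
proof -
  define B where "B = PiE UNIV (\<lambda>i::nat. if i < n then {-1..1::real} else {0})"
  define S where "S = B \<inter> {x. sum_sq n x = 1}"
  have "compactin (product_topology (\<lambda>i. euclidean) UNIV) B"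
    unfolding B_def by (subst compactin_PiE) auto
  then have "compact B"
    by (simp add: euclidean_product_topology)
  moreover have coord: "continuous_on U (\<lambda>x::nat \<Rightarrow> real. x i)" for U i
    by (rule continuous_on_subset[OF continuous_on_product_coordinates]) auto
  have "closed {x. sum_sq n x = 1}"
    unfolding sum_sq_def by (intro closed_Collect_eq continuous_intros coord)
  ultimately have "compact S"
    unfolding S_def by blast
  have "sum_sq n (\<lambda>i. of_bool (i = 0)) = 1"
    using n unfolding sum_sq_def by (simp add: power2_eq_square)
  then have "(\<lambda>i. of_bool (i = 0)) \<in> S"
    unfolding S_def B_def using n by (auto simp: PiE_iff)
  then have "S \<noteq> {}"
    by blast
  moreover have "continuous_on S (quad_form A n)"
    unfolding quad_form_def by (intro continuous_intros coord)
  ultimately obtain x where x: "x \<in> S" and x_max: "\<And>y. y \<in> S \<Longrightarrow> quad_form A n y \<le> quad_form A n x"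
    using continuous_attains_sup[OF \<open>compact S\<close>] by blast
  have "z \<in> S" if z: "sum_sq n z = 1" "\<forall>i\<ge>n. z i = 0" for z
  proof -
    have "z i \<in> {-1..1}" if "i < n" for i
    proof -
      have "(z i)\<^sup>2 \<le> 1\<^sup>2"
        using z(1) member_le_sum[of i "{..<n}" "\<lambda>i. (z i)\<^sup>2"] that unfolding sum_sq_def by simp
      then show ?thesis
        using abs_le_square_iff[of "z i" 1] by auto
    qed
    then show ?thesis
      unfolding S_def B_def using z by (auto simp: PiE_iff not_less)
  qed
  then have "quad_form A n y \<le> quad_form A n x * sum_sq n y" for y
    using x_max by (intro quad_form_le_if_le_on_unit_sphere) auto
  then show ?thesis
    using x unfolding S_def by blast
qed

lemma symmetric_mat_eigenvalue_bounds_quad_form: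
  assumes A: "A \<in> carrier_mat n n" and n: "0 < n"
    and sym: "\<forall>i<n. \<forall>j<n. A $$ (i, j) = A $$ (j, i)"
  shows "\<exists>\<mu>. eigenvalue A \<mu> \<and> (\<forall>y. quad_form A n y \<le> \<mu> * sum_sq n y)"
proof -
  obtain x where x: "sum_sq n x = 1" and max: "\<And>y. quad_form A n y \<le> quad_form A n x * sum_sq n y"
    using exists_rayleigh_maximiser[OF n] by blast
  define \<mu> where "\<mu> = quad_form A n x"
  have Ax: "(\<Sum>j<n. A $$ (i, j) * x j) = \<mu> * x i" if "i < n" for i
    using rayleigh_maximiser_eigen_equation[OF sym _ _ that] max x unfolding \<mu>_def by simp
  have "eigenvector A (vec n x) \<mu>"
    unfolding eigenvector_def
  proof (intro conjI)
    show "vec n x \<in> carrier_vec (dim_row A)"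
      using A by simp
    show "vec n x \<noteq> 0\<^sub>v (dim_row A)"
    proof
      assume "vec n x = 0\<^sub>v (dim_row A)"
      then have "\<forall>i<n. x i = 0"
        using A by (metis carrier_matD(1) index_vec index_zero_vec(1))
      then show False
        using x by (simp add: sum_sq_eq_0_iff[symmetric])
    qed
    show "A *\<^sub>v vec n x = \<mu> \<cdot>\<^sub>v vec n x"
      using A by (intro eq_vecI) (auto simp: scalar_prod_def atLeast0LessThan Ax)
  qed
  then show ?thesis
    using max unfolding eigenvalue_def \<mu>_def by blast
qed

lemma finite_eigenvalues:
  assumes "(A :: 'a :: field mat) \<in> carrier_mat n n"
  shows "finite {a. eigenvalue A a}"
proof -
  have "char_poly A \<noteq> 0"
    using degree_monic_char_poly[OF assms] by auto
  then show ?thesis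
    using poly_roots_finite eigenvalue_root_char_poly[OF assms] by simp
qed

lemma eigenvalue_uminus_mat:
  assumes A: "(A :: 'a :: comm_ring_1 mat) \<in> carrier_mat n n" and "eigenvalue (- A) a"
  shows "eigenvalue A (- a)"
proof -
  obtain v where v: "v \<in> carrier_vec n" "v \<noteq> 0\<^sub>v n" "- A *\<^sub>v v = a \<cdot>\<^sub>v v"
    using assms unfolding eigenvalue_def eigenvector_def by auto
  have "A *\<^sub>v v = (- a) \<cdot>\<^sub>v v"
  proof (rule eq_vecI)
    fix i assume "i < dim_vec ((- a) \<cdot>\<^sub>v v)"
    then have i: "i < n"
      using v(1) by simp
    have "- (A *\<^sub>v v) $ i = a * v $ i"
      using arg_cong[OF v(3), of "\<lambda>u. u $ i"] A v(1) i by simp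
    then have "(A *\<^sub>v v) $ i = - (a * v $ i)"
      by (metis minus_minus)
    then show "(A *\<^sub>v v) $ i = ((- a) \<cdot>\<^sub>v v) $ i"
      using i v(1) by simp
  qed (use A v(1) in simp)
  then show ?thesis
    using A v unfolding eigenvalue_def eigenvector_def by auto
qed

lemma quad_form_le_lambda_max:
  assumes A: "A \<in> carrier_mat n n" and n: "0 < n"
    and sym: "\<forall>i<n. \<forall>j<n. A $$ (i, j) = A $$ (j, i)"
  shows "quad_form A n x \<le> lambda_max A * sum_sq n x"
proof -
  obtain \<mu> where "eigenvalue A \<mu>" and \<mu>: "\<forall>y. quad_form A n y \<le> \<mu> * sum_sq n y"
    using symmetric_mat_eigenvalue_bounds_quad_form[OF A n sym] by blast
  then have "\<mu> \<le> lambda_max A"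
    unfolding lambda_max_def using finite_eigenvalues[OF A] by (intro Max_ge) auto
  then show ?thesis
    using \<mu> sum_sq_nonneg[of n x] by (meson mult_right_mono order_trans)
qed

lemma lambda_min_le_quad_form:
  assumes A: "A \<in> carrier_mat n n" and n: "0 < n"
    and sym: "\<forall>i<n. \<forall>j<n. A $$ (i, j) = A $$ (j, i)"
  shows "lambda_min A * sum_sq n x \<le> quad_form A n x"
proof -
  have "- A \<in> carrier_mat n n" "\<forall>i<n. \<forall>j<n. (- A) $$ (i, j) = (- A) $$ (j, i)"
    using A sym by auto
  then obtain \<nu> where "eigenvalue (- A) \<nu>" and \<nu>: "\<forall>y. quad_form (- A) n y \<le> \<nu> * sum_sq n y"
    using symmetric_mat_eigenvalue_bounds_quad_form[OF _ n] by blast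
  then have "lambda_min A \<le> - \<nu>"
    unfolding lambda_min_def using eigenvalue_uminus_mat[OF A] finite_eigenvalues[OF A]
    by (intro Min_le) auto
  moreover have "quad_form (- A) n x = - quad_form A n x"
    using A unfolding quad_form_def by (simp add: sum_negf[symmetric])
  then have "- \<nu> * sum_sq n x \<le> quad_form A n x"
    using \<nu> by (metis minus_le_iff mult_minus_left)
  ultimately show ?thesis
    using sum_sq_nonneg[of n x] by (meson mult_right_mono order_trans)
qed

lemma diag_le_lambda_max:
  assumes A: "A \<in> carrier_mat n n" and i: "i < n"
    and sym: "\<forall>i<n. \<forall>j<n. A $$ (i, j) = A $$ (j, i)"
  shows "A $$ (i, i) \<le> lambda_max A"
proof -
  define e where "e j = (if j = i then 1 else 0 :: real)" for j :: nat
  have "quad_form A n e = A $$ (i, i)" "sum_sq n e = 1"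
    using i unfolding quad_form_def sum_sq_def e_def
    by (simp_all add: if_distrib[of "\<lambda>x. _ * x"] if_distrib[of "\<lambda>x. x\<^sup>2"] if_distribR cong: if_cong)
  then show ?thesis
    using quad_form_le_lambda_max[OF A _ sym, of e] i by simp
qed

section \<open>Derivatives of \<open>ReLU\<^sup>p\<close>\<close>

lemma max0_power_has_derivative_at_0:
  assumes n: "2 \<le> n"
  shows "((\<lambda>z. max 0 z ^ n) has_real_derivative 0) (at 0)"
proof -
  have "((\<lambda>h. \<bar>h\<bar> ^ (n - 1)) \<longlongrightarrow> \<bar>0\<bar> ^ (n - 1)) (at (0::real))"
    by (intro tendsto_intros)
  moreover have "\<bar>0::real\<bar> ^ (n - 1) = 0"
    using n by simp
  ultimately have lim: "((\<lambda>h. \<bar>h\<bar> ^ (n - 1)) \<longlongrightarrow> 0) (at (0::real))"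
    by metis
  have "norm ((max 0 (0 + h) ^ n - max 0 0 ^ n) / h) \<le> \<bar>h\<bar> ^ (n - 1)" for h :: real
  proof (cases "h = 0")
    case False
    have "norm ((max 0 (0 + h) ^ n - max 0 0 ^ n) / h) = \<bar>max 0 h\<bar> ^ n / \<bar>h\<bar>"
      using n by (simp add: abs_divide power_abs)
    also have "\<dots> \<le> \<bar>h\<bar> ^ n / \<bar>h\<bar>"
      by (intro divide_right_mono power_mono) auto
    also have "\<dots> = \<bar>h\<bar> ^ (n - 1)"
      using False n by (simp add: power_diff)
    finally show ?thesis .
  qed simp
  then have "((\<lambda>h. (max 0 (0 + h) ^ n - max 0 0 ^ n) / h) \<longlongrightarrow> 0) (at (0::real))"
    by (intro Lim_null_comparison[OF _ lim]) auto
  then show ?thesis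
    unfolding DERIV_def by simp
qed

lemma has_real_derivative_max0_power:
  assumes n: "2 \<le> n"
  shows "((\<lambda>z. max 0 z ^ n) has_real_derivative real n * max 0 z ^ (n - 1)) (at z)"
proof (cases "0 < z")
  case True
  have "((\<lambda>z. z ^ n) has_real_derivative real n * z ^ (n - 1)) (at z)"
    using DERIV_pow by simp
  then have "((\<lambda>z. max 0 z ^ n) has_real_derivative real n * z ^ (n - 1)) (at z)"
    by (rule has_field_derivative_transform_within_open[of _ _ _ "{0<..}"]) (use True in auto)
  then show ?thesis
    using True by simp
next
  case False
  have "((\<lambda>z. max 0 z ^ n) has_real_derivative 0) (at z)"
  proof (cases "z = 0")
    case False
    show ?thesis
      by (rule has_field_derivative_transform_within_open[of "\<lambda>_. 0" _ _ "{..<0}"])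
        (use False \<open>\<not> 0 < z\<close> n in auto)
  qed (use max0_power_has_derivative_at_0[OF n] in simp)
  moreover have "real n * max 0 z ^ (n - 1) = 0"
    using False n by (simp add: power_0_left)
  ultimately show ?thesis
    by (simp only:)
qed

lemma relu_pow_deriv_closed_form:
  assumes "k < p"
  shows "relu_pow_deriv p k = (\<lambda>z. fact p / fact (p - k) * max 0 z ^ (p - k))"
  using assms unfolding relu_pow_deriv_def
proof (induction k)
  case 0
  show ?case
    by (simp add: relu_pow_def fun_eq_iff)
next
  case (Suc k)
  have IH: "(deriv ^^ k) (relu_pow p) = (\<lambda>z. fact p / fact (p - k) * max 0 z ^ (p - k))"
    using Suc by simp
  have deriv_eq: "deriv (\<lambda>z. fact p / fact (p - k) * max 0 z ^ (p - k)) z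
      = fact p / fact (p - Suc k) * max 0 z ^ (p - Suc k)" for z :: real
  proof -
    have der: "((\<lambda>z. fact p / fact (p - k) * max 0 z ^ (p - k)) has_real_derivative
        fact p / fact (p - k) * (real (p - k) * max 0 z ^ (p - k - 1))) (at z)"
      using Suc.prems by (intro DERIV_cmult has_real_derivative_max0_power) simp
    have "fact p / fact (p - k) * real (p - k) = (fact p / fact (p - Suc k) :: real)"
      using Suc.prems by (simp add: fact_reduce[of "p - k"] Suc_diff_Suc)
    moreover have "p - k - 1 = p - Suc k"
      by simp
    ultimately have "fact p / fact (p - k) * (real (p - k) * max 0 z ^ (p - k - 1))
        = fact p / fact (p - Suc k) * max 0 z ^ (p - Suc k)"
      by (metis mult.assoc)
    then show ?thesis
      using der by (intro DERIV_imp_deriv) simp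
  qed
  show ?case
    unfolding funpow.simps comp_apply IH using deriv_eq by (rule ext)
qed

section \<open>Gram matrices of the neurons\<close>

definition gram_mat :: "real \<Rightarrow> real \<Rightarrow> nat \<Rightarrow> (nat \<Rightarrow> real \<Rightarrow> real) \<Rightarrow> real mat" where
  "gram_mat a b n f = mat n n (\<lambda>(i, j). integral {a..b} (\<lambda>t. f i t * f j t))"

lemma gram_mat_carrier: "gram_mat a b n f \<in> carrier_mat n n"
  unfolding gram_mat_def by simp

lemma gram_mat_sym: "\<forall>i<n. \<forall>j<n. gram_mat a b n f $$ (i, j) = gram_mat a b n f $$ (j, i)"
  unfolding gram_mat_def by (simp add: mult.commute)

lemma quad_form_gram_mat:
  assumes "\<And>i. i < n \<Longrightarrow> continuous_on {a..b} (f i)"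
  shows "quad_form (gram_mat a b n f) n x = integral {a..b} (\<lambda>t. (\<Sum>i<n. x i * f i t)\<^sup>2)"
proof -
  have int: "(\<lambda>t. x i * f i t * (x j * f j t)) integrable_on {a..b}" if "i < n" "j < n" for i j
    by (intro integrable_continuous_interval continuous_intros) (use assms that in auto)
  have "integral {a..b} (\<lambda>t. (\<Sum>i<n. x i * f i t)\<^sup>2)
      = integral {a..b} (\<lambda>t. \<Sum>i<n. \<Sum>j<n. x i * f i t * (x j * f j t))"
    by (simp add: power2_eq_square sum_product)
  also have "\<dots> = (\<Sum>i<n. integral {a..b} (\<lambda>t. \<Sum>j<n. x i * f i t * (x j * f j t)))"
    by (rule integral_sum) (use int in \<open>auto intro: integrable_sum\<close>)
  also have "\<dots> = (\<Sum>i<n. \<Sum>j<n. integral {a..b} (\<lambda>t. x i * f i t * (x j * f j t)))"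
    by (intro sum.cong refl integral_sum) (use int in auto)
  also have "\<dots> = quad_form (gram_mat a b n f) n x"
    unfolding quad_form_def gram_mat_def by (intro sum.cong refl) (simp add: mult_ac)
  finally show ?thesis ..
qed

text \<open>\<open>neuron p k w \<beta>\<close> is the \<open>k\<close>-th derivative of \<open>t \<mapsto> ReLU\<^sup>p(w t - \<beta>)\<close>.\<close>

definition neuron :: "nat \<Rightarrow> nat \<Rightarrow> real \<Rightarrow> real \<Rightarrow> real \<Rightarrow> real" where
  "neuron p k w \<beta> t = w ^ k * relu_pow_deriv p k (w * t - \<beta>)"

lemma gram_matrix_eq_gram_mat:
  "gram_matrix p k w b N = gram_mat (-1) 1 N (\<lambda>i. neuron p k (w N (i + 1)) (b N (i + 1)))"
  unfolding gram_matrix_def gram_mat_def neuron_def by (simp add: mult_ac)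

lemma neuron_closed_form:
  "k < p \<Longrightarrow> neuron p k w \<beta> t = w ^ k * (fact p / fact (p - k) * max 0 (w * t - \<beta>) ^ (p - k))"
  unfolding neuron_def by (simp add: relu_pow_deriv_closed_form)

lemma continuous_on_neuron:
  assumes "k < p"
  shows "continuous_on S (neuron p k w \<beta>)"
proof -
  have "neuron p k w \<beta> = (\<lambda>t. w ^ k * (fact p / fact (p - k) * max 0 (w * t - \<beta>) ^ (p - k)))"
    using neuron_closed_form[OF assms] by (simp add: fun_eq_iff)
  then show ?thesis
    by (simp add: continuous_intros)
qed

lemma integral_neuron_sq_ge:
  assumes "k < p" and w: "w \<in> {1, -1}" and \<beta>: "\<beta> \<le> -1/2"
  shows "(fact p / fact (p - k))\<^sup>2 * ((1/2) ^ (p - k))\<^sup>2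
    \<le> integral {-1..1} (\<lambda>t. neuron p k w \<beta> t * neuron p k w \<beta> t)"
proof -
  define K :: real where "K = fact p / fact (p - k)"
  define g where "g t = neuron p k w \<beta> t * neuron p k w \<beta> t" for t
  have "w ^ k * w ^ k = 1"
    using w by (auto simp flip: power_mult_distrib)
  then have g: "g t = K\<^sup>2 * (max 0 (w * t - \<beta>) ^ (p - k))\<^sup>2" for t
    unfolding g_def neuron_closed_form[OF \<open>k < p\<close>] K_def
    by (simp add: power2_eq_square algebra_simps)
  have cont: "continuous_on U g" for U
    unfolding g_def using \<open>k < p\<close> by (intro continuous_intros continuous_on_neuron)
  obtain l where l: "{l..l + 1} \<subseteq> {-1..1}" and pos: "\<And>t. t \<in> {l..l + 1} \<Longrightarrow> 0 \<le> w * t"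
    using w by (cases "w = 1") (auto intro: that[of 0] that[of "-1"])
  have "K\<^sup>2 * ((1/2) ^ (p - k))\<^sup>2 = integral {l..l + 1} (\<lambda>_. K\<^sup>2 * ((1/2) ^ (p - k))\<^sup>2)"
    by simp
  also have "\<dots> \<le> integral {l..l + 1} g"
  proof (rule integral_le)
    fix t assume "t \<in> {l..l + 1}"
    then have "0 \<le> w * t"
      by (rule pos)
    then have "1/2 \<le> max 0 (w * t - \<beta>)"
      by (intro max.coboundedI2) (use \<beta> in linarith)
    then have "(1/2) ^ (p - k) \<le> max 0 (w * t - \<beta>) ^ (p - k)"
      by (rule power_mono) simp
    then show "K\<^sup>2 * ((1/2) ^ (p - k))\<^sup>2 \<le> g t"
      unfolding g by (simp add: mult_left_mono power_mono)
  qed (auto intro: integrable_continuous_interval cont)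
  also have "\<dots> \<le> integral {-1..1} g"
    by (rule integral_subset_le[OF l]) (auto intro: integrable_continuous_interval cont simp: g)
  finally show ?thesis
    unfolding K_def g_def .
qed

lemma lambda_max_gram_matrix_ge:
  assumes "k < p" "0 < N" "w N 1 \<in> {1, -1}" "b N 1 \<le> -1/2"
  shows "(fact p / fact (p - k))\<^sup>2 * ((1/2) ^ (p - k))\<^sup>2 \<le> lambda_max (gram_matrix p k w b N)"
proof -
  have "(fact p / fact (p - k))\<^sup>2 * ((1/2) ^ (p - k))\<^sup>2 \<le> gram_matrix p k w b N $$ (0, 0)"
    using integral_neuron_sq_ge[OF assms(1,3,4)] \<open>0 < N\<close>
    by (simp add: gram_matrix_eq_gram_mat gram_mat_def)
  also have "\<dots> \<le> lambda_max (gram_matrix p k w b N)"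
    unfolding gram_matrix_eq_gram_mat by (rule diag_le_lambda_max[OF gram_mat_carrier \<open>0 < N\<close> gram_mat_sym])
  finally show ?thesis .
qed

section \<open>Combinations of truncated powers with vanishing moments\<close>

lemma exists_vanishing_moments:
  fixes \<beta> :: "nat \<Rightarrow> real"
  assumes T: "finite T" and card: "m + 1 < card T"
  shows "\<exists>v. (\<forall>i. i \<notin> T \<longrightarrow> v i = 0) \<and> (\<exists>i\<in>T. v i \<noteq> 0)
    \<and> (\<forall>r\<le>m. (\<Sum>i\<in>T. v i * \<beta> i ^ r) = 0)"
proof -
  define c where "c = card T"
  obtain f where f: "bij_betw f {0..<c} T"
    using ex_bij_betw_nat_finite[OF T] unfolding c_def by blast
  \<comment> \<open>Singular because of its zero row; a kernel vector annihilates every moment of order \<open>< c - 1\<close>.\<close>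
  define M where "M = mat\<^sub>r c c (\<lambda>r. if r = c - 1 then 0\<^sub>v c else vec c (\<lambda>a. \<beta> (f a) ^ r))"
  have "det M = 0"
    unfolding M_def using card unfolding c_def by (intro det_row_0) auto
  then obtain u where u: "u \<in> carrier_vec c" "u \<noteq> 0\<^sub>v c" "M *\<^sub>v u = 0\<^sub>v c"
    using det_0_iff_vec_prod_zero[of M c] unfolding M_def by auto
  define v where "v i = (if i \<in> T then u $ inv_into {0..<c} f i else 0)" for i
  have v_f: "v (f a) = u $ a" if "a < c" for a
    using f that unfolding v_def by (auto simp: bij_betw_inv_into_left bij_betw_apply)
  have sum_T: "(\<Sum>i\<in>T. v i * g i) = (\<Sum>a<c. u $ a * g (f a))" for g :: "nat \<Rightarrow> real"
    by (simp add: sum.reindex_bij_betw[OF f, symmetric] lessThan_atLeast0 v_f)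
  have "\<forall>r\<le>m. (\<Sum>i\<in>T. v i * \<beta> i ^ r) = 0"
  proof (intro allI impI)
    fix r assume "r \<le> m"
    then have r: "r < c" "r \<noteq> c - 1"
      using card unfolding c_def by auto
    have "0 = (M *\<^sub>v u) $ r"
      using u(3) r by simp
    also have "\<dots> = (\<Sum>a<c. u $ a * \<beta> (f a) ^ r)"
      using r u(1) unfolding M_def by (simp add: scalar_prod_def lessThan_atLeast0 mult.commute)
    finally show "(\<Sum>i\<in>T. v i * \<beta> i ^ r) = 0"
      by (simp add: sum_T)
  qed
  moreover obtain a where "a < c" "u $ a \<noteq> 0"
    using u(1,2) by (metis carrier_vecD eq_vecI index_zero_vec)
  then have "\<exists>i\<in>T. v i \<noteq> 0"
    using bij_betw_apply[OF f, of a] v_f[of a] by (intro bexI[of _ "f a"]) auto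
  moreover have "\<forall>i. i \<notin> T \<longrightarrow> v i = 0"
    unfolding v_def by simp
  ultimately show ?thesis
    by blast
qed

lemma moment_annihilator_shifted_power_eq_0:
  fixes \<beta> v :: "nat \<Rightarrow> real"
  assumes mom: "\<forall>r\<le>m. (\<Sum>i\<in>T. v i * \<beta> i ^ r) = 0"
  shows "(\<Sum>i\<in>T. v i * (y - \<beta> i) ^ m) = 0"
proof -
  have "(\<Sum>i\<in>T. v i * (y - \<beta> i) ^ m)
      = (\<Sum>i\<in>T. \<Sum>r\<le>m. (of_nat (m choose r) * (-1) ^ r * y ^ (m - r)) * (v i * \<beta> i ^ r))"
  proof (intro sum.cong refl)
    fix i
    have "(- \<beta> i + y) ^ m = (\<Sum>r\<le>m. of_nat (m choose r) * (- \<beta> i) ^ r * y ^ (m - r))"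
      by (rule binomial_ring)
    then show "v i * (y - \<beta> i) ^ m
        = (\<Sum>r\<le>m. (of_nat (m choose r) * (-1) ^ r * y ^ (m - r)) * (v i * \<beta> i ^ r))"
      by (simp add: power_minus[of "\<beta> i"] sum_distrib_left ac_simps)
  qed
  also have "\<dots> = (\<Sum>r\<le>m. (of_nat (m choose r) * (-1) ^ r * y ^ (m - r)) * (\<Sum>i\<in>T. v i * \<beta> i ^ r))"
    by (subst sum.swap) (simp add: sum_distrib_left)
  also have "\<dots> = 0"
    using mom by simp
  finally show ?thesis .
qed

text \<open>To the right of all biases the truncated powers are plain powers, and their combination
  vanishes.\<close>

lemma truncated_power_combination_bound:
  fixes \<beta> v :: "nat \<Rightarrow> real"
  assumes m: "0 < m" and bnds: "\<forall>i\<in>T. lo \<le> \<beta> i \<and> \<beta> i \<le> hi"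
    and mom: "\<forall>r\<le>m. (\<Sum>i\<in>T. v i * \<beta> i ^ r) = 0"
  shows "\<bar>\<Sum>i\<in>T. v i * max 0 (y - \<beta> i) ^ m\<bar>
    \<le> (if lo \<le> y \<and> y \<le> hi then (\<Sum>i\<in>T. \<bar>v i\<bar>) * (hi - lo) ^ m else 0)"
proof (cases "lo \<le> y \<and> y \<le> hi")
  case True
  have "\<bar>\<Sum>i\<in>T. v i * max 0 (y - \<beta> i) ^ m\<bar> \<le> (\<Sum>i\<in>T. \<bar>v i\<bar> * (hi - lo) ^ m)"
  proof (intro order_trans[OF sum_abs] sum_mono)
    fix i assume "i \<in> T"
    then have "max 0 (y - \<beta> i) ^ m \<le> (hi - lo) ^ m"
      using bnds True by (intro power_mono) auto
    then show "\<bar>v i * max 0 (y - \<beta> i) ^ m\<bar> \<le> \<bar>v i\<bar> * (hi - lo) ^ m"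
      by (simp add: abs_mult mult_left_mono)
  qed
  then show ?thesis
    using True by (simp add: sum_distrib_right)
next
  case False
  have "(\<Sum>i\<in>T. v i * max 0 (y - \<beta> i) ^ m) = 0"
  proof (cases "y < lo")
    case True
    then show ?thesis
      using bnds m by (intro sum.neutral) auto
  next
    case False
    then have "(\<Sum>i\<in>T. v i * max 0 (y - \<beta> i) ^ m) = (\<Sum>i\<in>T. v i * (y - \<beta> i) ^ m)"
      using \<open>\<not> (lo \<le> y \<and> y \<le> hi)\<close> bnds by (intro sum.cong) auto
    also have "\<dots> = 0"
      using mom by (rule moment_annihilator_shifted_power_eq_0)
    finally show ?thesis .
  qed
  then show ?thesis
    using False by simp
qed

lemma integral_le_bounded_on_interval:
  fixes g :: "real \<Rightarrow> real"
  assumes g: "continuous_on {a..b} g" and "0 \<le> M" "c \<le> d"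
    and le: "\<And>t. t \<in> {a..b} \<Longrightarrow> g t \<le> (if t \<in> {c..d} then M else 0)"
  shows "integral {a..b} g \<le> M * (d - c)"
proof -
  have I: "{c..d} \<inter> {a..b} = {max a c..min b d}"
    by auto
  have int: "(\<lambda>t. if t \<in> {c..d} then M else 0) integrable_on {a..b}"
    unfolding integrable_restrict_Int I by (rule integrable_continuous_interval) simp
  have "integral {a..b} g \<le> integral {a..b} (\<lambda>t. if t \<in> {c..d} then M else 0)"
    by (intro integral_le integrable_continuous_interval g int le)
  also have "\<dots> = (if max a c \<le> min b d then min b d - max a c else 0) * M"
    unfolding integral_restrict_Int I by simp
  also have "\<dots> \<le> M * (d - c)"
    using assms by (simp add: mult.commute mult_left_mono)
  finally show ?thesis .
qed

lemma integral_truncated_power_combination_sq: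
  fixes \<beta> v :: "nat \<Rightarrow> real"
  assumes m: "0 < m" and \<sigma>: "\<sigma> \<in> {1, -1}" and "lo \<le> hi"
    and bnds: "\<forall>i\<in>T. lo \<le> \<beta> i \<and> \<beta> i \<le> hi"
    and mom: "\<forall>r\<le>m. (\<Sum>i\<in>T. v i * \<beta> i ^ r) = 0"
  shows "integral {a..b} (\<lambda>t. (\<Sum>i\<in>T. v i * max 0 (\<sigma> * t - \<beta> i) ^ m)\<^sup>2)
    \<le> (\<Sum>i\<in>T. \<bar>v i\<bar>)\<^sup>2 * (hi - lo) ^ (2 * m + 1)"
proof -
  define V where "V = (\<Sum>i\<in>T. \<bar>v i\<bar>)"
  define M where "M = V\<^sup>2 * (hi - lo) ^ (2 * m)"
  obtain c d where cd: "c \<le> d" "d - c = hi - lo" "\<And>t. lo \<le> \<sigma> * t \<and> \<sigma> * t \<le> hi \<longleftrightarrow> t \<in> {c..d}"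
    using \<sigma> \<open>lo \<le> hi\<close> by (cases "\<sigma> = 1") (auto intro: that[of lo hi] that[of "- hi" "- lo"])
  have "(\<Sum>i\<in>T. v i * max 0 (\<sigma> * t - \<beta> i) ^ m)\<^sup>2 \<le> (if t \<in> {c..d} then M else 0)" for t
  proof -
    define S where "S = (\<Sum>i\<in>T. v i * max 0 (\<sigma> * t - \<beta> i) ^ m)"
    have "\<bar>S\<bar> \<le> (if lo \<le> \<sigma> * t \<and> \<sigma> * t \<le> hi then V * (hi - lo) ^ m else 0)"
      unfolding S_def V_def by (rule truncated_power_combination_bound[OF m bnds mom])
    then have bound: "\<bar>S\<bar> \<le> (if t \<in> {c..d} then V * (hi - lo) ^ m else 0)"
      unfolding cd(3) .
    show ?thesis
    proof (cases "t \<in> {c..d}")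
      case True
      then have "\<bar>S\<bar>\<^sup>2 \<le> (V * (hi - lo) ^ m)\<^sup>2"
        using bound by (intro power_mono) auto
      then show ?thesis
        using True unfolding S_def M_def by (simp add: power_mult_distrib power_even_eq)
    next
      case False
      then have "S = 0"
        using bound by (metis abs_le_zero_iff)
      then show ?thesis
        unfolding if_not_P[OF False] S_def[symmetric] by simp
    qed
  qed
  then have "integral {a..b} (\<lambda>t. (\<Sum>i\<in>T. v i * max 0 (\<sigma> * t - \<beta> i) ^ m)\<^sup>2) \<le> M * (d - c)"
    using cd(1) by (intro integral_le_bounded_on_interval) (auto simp: M_def intro!: continuous_intros)
  then show ?thesis
    unfolding cd(2) M_def V_def by (simp add: mult_ac)
qed

lemma exists_equal_sign_subset:
  assumes "\<forall>i<2 * c + 1. s i \<in> {1, -1 :: real}"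
  shows "\<exists>\<sigma> T. \<sigma> \<in> {1, -1} \<and> T \<subseteq> {..<2 * c + 1} \<and> card T = c + 1 \<and> (\<forall>i\<in>T. s i = \<sigma>)"
proof -
  define P where "P \<sigma> = {i. i < 2 * c + 1 \<and> s i = \<sigma>}" for \<sigma>
  have "card (P 1 \<union> P (-1)) = card (P 1) + card (P (-1))"
    by (rule card_Un_disjoint) (auto simp: P_def)
  moreover have "P 1 \<union> P (-1) = {..<2 * c + 1}"
    using assms unfolding P_def by auto
  ultimately have card: "card (P 1) + card (P (-1)) = 2 * c + 1"
    by simp
  obtain \<sigma> where \<sigma>: "\<sigma> \<in> {1, -1}" "c + 1 \<le> card (P \<sigma>)"
  proof (cases "c + 1 \<le> card (P 1)")
    case True
    then show ?thesis
      using that[of 1] by simp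
  next
    case False
    then show ?thesis
      using that[of "-1"] card by simp
  qed
  obtain T where T: "T \<subseteq> P \<sigma>" "card T = c + 1" "finite T"
    by (rule obtain_subset_with_card_n[OF \<sigma>(2)])
  have "T \<subseteq> {..<2 * c + 1}" "\<forall>i\<in>T. s i = \<sigma>"
    using T(1) unfolding P_def by auto
  then show ?thesis
    using \<sigma>(1) T(2) by blast
qed

section \<open>A vector with small Rayleigh quotient\<close>

lemma sum_neurons_sq_eq:
  fixes v s \<beta> :: "nat \<Rightarrow> real"
  assumes "k < p" and T: "T \<subseteq> {..<n}" and v0: "\<forall>i. i \<notin> T \<longrightarrow> v i = 0"
    and \<sigma>: "\<sigma> \<in> {1, -1}" and s: "\<forall>i\<in>T. s i = \<sigma>"
  shows "(\<Sum>i<n. v i * neuron p k (s i) (\<beta> i) t)\<^sup>2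
    = (fact p / fact (p - k))\<^sup>2 * (\<Sum>i\<in>T. v i * max 0 (\<sigma> * t - \<beta> i) ^ (p - k))\<^sup>2"
proof -
  have "(\<Sum>i<n. v i * neuron p k (s i) (\<beta> i) t) = (\<Sum>i\<in>T. v i * neuron p k (s i) (\<beta> i) t)"
    by (rule sum.mono_neutral_right) (use T v0 in auto)
  also have "\<dots> = \<sigma> ^ k * (fact p / fact (p - k)) * (\<Sum>i\<in>T. v i * max 0 (\<sigma> * t - \<beta> i) ^ (p - k))"
    unfolding sum_distrib_left
    by (intro sum.cong refl) (use s in \<open>simp add: neuron_closed_form[OF \<open>k < p\<close>]\<close>)
  finally have sum_eq: "(\<Sum>i<n. v i * neuron p k (s i) (\<beta> i) t)
      = \<sigma> ^ k * (fact p / fact (p - k)) * (\<Sum>i\<in>T. v i * max 0 (\<sigma> * t - \<beta> i) ^ (p - k))" .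
  have "\<sigma> ^ k * \<sigma> ^ k = 1"
    using \<sigma> by (auto simp flip: power_mult_distrib)
  then show ?thesis
    unfolding sum_eq by (simp add: power2_eq_square algebra_simps)
qed

lemma exists_vector_small_neuron_form:
  fixes s \<beta> :: "nat \<Rightarrow> real"
  assumes "k < p" and T: "finite T" "T \<subseteq> {..<n}" "p - k + 1 < card T"
    and \<sigma>: "\<sigma> \<in> {1, -1}" and sT: "\<forall>i\<in>T. s i = \<sigma> \<and> lo \<le> \<beta> i \<and> \<beta> i \<le> hi"
  shows "\<exists>x. 0 < sum_sq n x \<and>
    integral {a..b} (\<lambda>t. (\<Sum>i<n. x i * neuron p k (s i) (\<beta> i) t)\<^sup>2)
      \<le> (fact p / fact (p - k))\<^sup>2 * real (card T) * (hi - lo) ^ (2 * (p - k) + 1) * sum_sq n x"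
proof -
  define m where "m = p - k"
  define K :: real where "K = (fact p / fact m)\<^sup>2"
  obtain v where v0: "\<forall>i. i \<notin> T \<longrightarrow> v i = 0" and v_nz: "\<exists>i\<in>T. v i \<noteq> 0"
    and mom: "\<forall>r\<le>m. (\<Sum>i\<in>T. v i * \<beta> i ^ r) = 0"
    using exists_vanishing_moments[OF T(1)] T(3) unfolding m_def by blast
  have ss: "sum_sq n v = (\<Sum>i\<in>T. (v i)\<^sup>2)"
    unfolding sum_sq_def by (rule sum.mono_neutral_right) (use T v0 in auto)
  obtain i1 where "i1 \<in> T" "v i1 \<noteq> 0"
    using v_nz by blast
  then have "0 < sum_sq n v"
    unfolding ss by (intro sum_pos2[OF T(1)]) auto
  have "lo \<le> hi"
    using sT \<open>i1 \<in> T\<close> by force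
  have "\<forall>i\<in>T. s i = \<sigma>"
    using sT by blast
  note sum_neurons = sum_neurons_sq_eq[OF \<open>k < p\<close> T(2) v0 \<sigma> this]
  have "integral {a..b} (\<lambda>t. (\<Sum>i\<in>T. v i * max 0 (\<sigma> * t - \<beta> i) ^ m)\<^sup>2)
      \<le> (\<Sum>i\<in>T. \<bar>v i\<bar>)\<^sup>2 * (hi - lo) ^ (2 * m + 1)"
    by (rule integral_truncated_power_combination_sq[OF _ \<sigma> \<open>lo \<le> hi\<close> _ mom])
      (use \<open>k < p\<close> sT in \<open>auto simp: m_def\<close>)
  also have "\<dots> \<le> sum_sq n v * real (card T) * (hi - lo) ^ (2 * m + 1)"
    unfolding ss using \<open>lo \<le> hi\<close> sum_squared_le_sum_of_squares[of "\<lambda>i. \<bar>v i\<bar>" T]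
    by (intro mult_right_mono) auto
  finally have "integral {a..b} (\<lambda>t. (\<Sum>i<n. v i * neuron p k (s i) (\<beta> i) t)\<^sup>2)
      \<le> K * (sum_sq n v * real (card T) * (hi - lo) ^ (2 * m + 1))"
    unfolding sum_neurons integral_mult_right K_def m_def by (intro mult_left_mono) auto
  then show ?thesis
    using \<open>0 < sum_sq n v\<close> unfolding K_def m_def by (intro exI[of _ v]) (simp add: mult_ac)
qed

lemma lambda_min_gram_matrix_le:
  assumes "k < p" and N: "2 * (p - k) + 3 \<le> N"
    and wb: "\<forall>n\<in>{1..2 * (p - k) + 3}. w N n \<in> {1, -1} \<and> lo \<le> b N n \<and> b N n \<le> hi"
  shows "lambda_min (gram_matrix p k w b N)
    \<le> (fact p / fact (p - k))\<^sup>2 * real (p - k + 2) * (hi - lo) ^ (2 * (p - k) + 1)"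
proof -
  define f where "f = (\<lambda>i. neuron p k (w N (i + 1)) (b N (i + 1)))"
  define G where "G = gram_mat (-1) 1 N f"
  have G: "gram_matrix p k w b N = G"
    unfolding G_def f_def by (rule gram_matrix_eq_gram_mat)
  obtain \<sigma> T where \<sigma>: "\<sigma> \<in> {1, -1}" and T: "T \<subseteq> {..<2 * (p - k + 1) + 1}"
    and card: "card T = p - k + 2" and sT: "\<forall>i\<in>T. w N (i + 1) = \<sigma>"
    using exists_equal_sign_subset[of "p - k + 1" "\<lambda>i. w N (i + 1)"] wb by fastforce
  have "finite T" "T \<subseteq> {..<N}"
    using T N finite_subset by auto
  moreover have "\<forall>i\<in>T. w N (i + 1) = \<sigma> \<and> lo \<le> b N (i + 1) \<and> b N (i + 1) \<le> hi"
    using sT T wb by fastforce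
  ultimately have "\<exists>x. 0 < sum_sq N x \<and> integral {-1..1} (\<lambda>t. (\<Sum>i<N. x i * f i t)\<^sup>2)
      \<le> (fact p / fact (p - k))\<^sup>2 * real (card T) * (hi - lo) ^ (2 * (p - k) + 1) * sum_sq N x"
    unfolding f_def using card
    by (intro exists_vector_small_neuron_form[OF \<open>k < p\<close> _ _ _ \<sigma>,
          where s = "\<lambda>i. w N (i + 1)" and \<beta> = "\<lambda>i. b N (i + 1)"]) auto
  then obtain x where x: "0 < sum_sq N x"
    and small: "integral {-1..1} (\<lambda>t. (\<Sum>i<N. x i * f i t)\<^sup>2)
      \<le> (fact p / fact (p - k))\<^sup>2 * real (p - k + 2) * (hi - lo) ^ (2 * (p - k) + 1) * sum_sq N x"
    unfolding card by blast
  have "lambda_min G * sum_sq N x \<le> quad_form G N x"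
    unfolding G_def using N by (intro lambda_min_le_quad_form gram_mat_carrier gram_mat_sym) auto
  also have "\<dots> = integral {-1..1} (\<lambda>t. (\<Sum>i<N. x i * f i t)\<^sup>2)"
    unfolding G_def f_def using \<open>k < p\<close> by (intro quad_form_gram_mat continuous_on_neuron)
  finally have "lambda_min G * sum_sq N x
      \<le> (fact p / fact (p - k))\<^sup>2 * real (p - k + 2) * (hi - lo) ^ (2 * (p - k) + 1) * sum_sq N x"
    using small by (rule order_trans)
  then show ?thesis
    unfolding G using x by (rule mult_right_le_imp_le)
qed

lemma lambda_max_ge_scaled_lambda_min:
  fixes p k N :: nat and w b :: "nat \<Rightarrow> nat \<Rightarrow> real"
  defines "m \<equiv> p - k" and "q \<equiv> 2 * (p - k) + 3"
  assumes "k < p" and N: "q \<le> N" and w: "\<forall>n\<in>{1..q}. w N n \<in> {1, -1}" and b1: "b N 1 \<le> -1/2"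
    and bq: "\<forall>n\<in>{1..q}. -1 - 1 / real N \<le> b N n \<and> b N n \<le> -1 + (2 * real q - 1) / real N"
  shows "((1/2) ^ m)\<^sup>2 / (real (m + 2) * (2 * real q) ^ (2 * m + 1)) * real N ^ (1 + 2 * m)
      * lambda_min (gram_matrix p k w b N) \<le> lambda_max (gram_matrix p k w b N)"
proof -
  define K :: real where "K = (fact p / fact m)\<^sup>2"
  define C where "C = ((1/2) ^ m)\<^sup>2 / (real (m + 2) * (2 * real q) ^ (2 * m + 1))"
  define lo hi where "lo = -1 - 1 / real N" and "hi = -1 + (2 * real q - 1) / real N"
  have "0 < N"
    using N unfolding q_def by simp
  have "lambda_min (gram_matrix p k w b N) \<le> K * real (m + 2) * (hi - lo) ^ (2 * m + 1)"
    unfolding K_def m_def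
    by (rule lambda_min_gram_matrix_le[OF \<open>k < p\<close>]) (use N bq w in \<open>auto simp: q_def lo_def hi_def\<close>)
  moreover have "hi - lo = 2 * real q / real N"
    unfolding lo_def hi_def using \<open>0 < N\<close> by (simp add: field_simps)
  ultimately have "C * real N ^ (2 * m + 1) * lambda_min (gram_matrix p k w b N)
      \<le> C * real N ^ (2 * m + 1) * (K * real (m + 2) * (2 * real q / real N) ^ (2 * m + 1))"
    by (intro mult_left_mono) (simp_all add: C_def)
  also have "\<dots> = C * (real N ^ (2 * m + 1) * (2 * real q / real N) ^ (2 * m + 1)) * K * real (m + 2)"
    by (simp only: mult_ac)
  also have "\<dots> = K * ((1/2) ^ m)\<^sup>2"
    unfolding C_def using \<open>0 < N\<close> by (simp add: power_divide q_def)
  also have "\<dots> \<le> lambda_max (gram_matrix p k w b N)"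
    using lambda_max_gram_matrix_ge[of k p N w b] \<open>k < p\<close> \<open>0 < N\<close> b1 w N
    unfolding K_def m_def q_def by auto
  finally show ?thesis
    unfolding C_def by (simp only: add.commute)
qed

lemma quasi_evenly_spaced_initial_biases:
  assumes "quasi_evenly_spaced b"
  shows "\<forall>\<^sub>F N in sequentially. \<forall>n\<in>{1..q}.
    -1 - 1 / real N \<le> b N n \<and> b N n \<le> -1 + (2 * real q - 1) / real N"
proof -
  have "\<exists>N0. \<forall>N\<ge>N0. \<forall>n\<in>{1..N}. \<bar>b N n - (-1 + 2 * (real n - 1) / real N)\<bar> \<le> 1 / real N"
    using assms[unfolded quasi_evenly_spaced_def, rule_format, of 1] by simp
  then obtain N0 where N0: "\<And>N n. N \<ge> N0 \<Longrightarrow> n \<in> {1..N} \<Longrightarrow>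
      \<bar>b N n - (-1 + 2 * (real n - 1) / real N)\<bar> \<le> 1 / real N"
    by blast
  have "\<forall>n\<in>{1..q}. -1 - 1 / real N \<le> b N n \<and> b N n \<le> -1 + (2 * real q - 1) / real N"
    if N: "max N0 (max q 1) \<le> N" for N
  proof
    fix n assume n: "n \<in> {1..q}"
    have "\<bar>b N n - (-1 + 2 * (real n - 1) / real N)\<bar> \<le> 1 / real N"
      using N0[of N n] N n by auto
    moreover have "0 \<le> 2 * (real n - 1) / real N" "2 * (real n - 1) / real N \<le> 2 * (real q - 1) / real N"
      using n N by (auto intro: divide_right_mono)
    ultimately show "-1 - 1 / real N \<le> b N n \<and> b N n \<le> -1 + (2 * real q - 1) / real N"
      by (simp add: abs_le_iff diff_divide_distrib add_divide_distrib)
  qed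
  then show ?thesis
    by (intro eventually_sequentiallyI)
qed

lemma quasi_evenly_spaced_first_bias:
  assumes "quasi_evenly_spaced b"
  shows "\<forall>\<^sub>F N in sequentially. b N 1 \<le> -1/2"
proof -
  have "\<forall>\<^sub>F N in sequentially. 2 \<le> N \<and> (\<forall>n\<in>{1..1}. b N n \<le> -1 + (2 * real 1 - 1) / real N)"
    using quasi_evenly_spaced_initial_biases[OF assms, of 1]
    by (intro eventually_conj eventually_ge_at_top) (auto elim: eventually_mono)
  then show ?thesis
  proof (rule eventually_mono)
    fix N assume N: "2 \<le> N \<and> (\<forall>n\<in>{1..1}. b N n \<le> -1 + (2 * real 1 - 1) / real N)"
    then have "b N 1 \<le> -1 + 1 / real N"
      by simp
    moreover have "1 / real N \<le> 1/2"
      using N by (simp add: field_simps)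
    ultimately show "b N 1 \<le> -1/2"
      by linarith
  qed
qed

theorem theorem2:
  fixes p k :: nat and w b :: "nat \<Rightarrow> nat \<Rightarrow> real"
  assumes "1 \<le> p" and "k < p"
    and "\<forall>N\<ge>1. \<forall>n\<in>{1..N}. w N n \<in> {1, -1}"
    and "quasi_evenly_spaced b"
  shows "\<exists>C>0. \<forall>\<^sub>F N in sequentially.
           lambda_max (gram_matrix p k w b N)
             \<ge> C * real N ^ (1 + 2 * (p - k)) * lambda_min (gram_matrix p k w b N)"
proof -
  define q where "q = 2 * (p - k) + 3"
  define C where "C = ((1/2) ^ (p - k))\<^sup>2 / (real (p - k + 2) * (2 * real q) ^ (2 * (p - k) + 1))"
  have "\<forall>\<^sub>F N in sequentially. q \<le> N \<and> b N 1 \<le> -1/2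
      \<and> (\<forall>n\<in>{1..q}. -1 - 1 / real N \<le> b N n \<and> b N n \<le> -1 + (2 * real q - 1) / real N)"
    using assms(4) by (intro eventually_conj eventually_ge_at_top
        quasi_evenly_spaced_first_bias quasi_evenly_spaced_initial_biases)
  then have "\<forall>\<^sub>F N in sequentially.
      C * real N ^ (1 + 2 * (p - k)) * lambda_min (gram_matrix p k w b N) \<le> lambda_max (gram_matrix p k w b N)"
  proof (rule eventually_mono)
    fix N assume N: "q \<le> N \<and> b N 1 \<le> -1/2
      \<and> (\<forall>n\<in>{1..q}. -1 - 1 / real N \<le> b N n \<and> b N n \<le> -1 + (2 * real q - 1) / real N)"
    moreover have "\<forall>n\<in>{1..q}. w N n \<in> {1, -1}"
      using N assms(3) by auto
    ultimately show "C * real N ^ (1 + 2 * (p - k)) * lambda_min (gram_matrix p k w b N)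
        \<le> lambda_max (gram_matrix p k w b N)"
      unfolding C_def q_def using lambda_max_ge_scaled_lambda_min[OF \<open>k < p\<close>] by blast
  qed
  moreover have "0 < C"
    unfolding C_def q_def by simp
  ultimately show ?thesis
    by auto
qed

end
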